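(* Let $f,g\in\mathbb{F}[Y,Z]$. If $g$ has $r$ monomials, then $\mathrm{maxrank}(M_{fg})\le r\cdot\mathrm{maxrank}(M_f)$.
   Context: $\mathbb{F}$ is a field, $Y=\{y_1,\dots,y_m\}$ and $Z=\{z_1,\dots,z_m\}$ are disjoint sets of variables. For $f\in\mathbb{F}[Y,Z]$, the polynomial coefficient matrix $M_f$ is the $2^m\times 2^m$ matrix with entries in $\mathbb{F}[Y,Z]$, rows indexed by monic multilinear monomials $p$ in $Y$ and columns by monic multilinear monomials $q$ in $Z$, where $M_f(p,q)=G$ if and only if $f$ can be uniquely written as $f=pq\,G+Q$ with $G$ containing no variable other than those present in $p$ and $q$, and $Q$ having no monomial which is divisible by $pq$ and contains only variables present in $p$ and $q$. For $S:Y\cup Z\to\mathbb{F}$, $M_f|_S$ is obtained by evaluating each entry at $S$, and $\mathrm{maxrank}(M_f)=\max_S\mathrm{rank}(M_f|_S)$. *)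

theory Defs
  imports "HOL-Library.Poly_Mapping" "Jordan_Normal_Form.DL_Rank"
begin

text \<open>Multivariate polynomials over a field 'a in the variables y_0..y_(m-1)
  (encoded as Inl i) and z_0..z_(m-1) (encoded as Inr i): a polynomial is a
  finitely supported map from exponent vectors to coefficients.\<close>

type_synonym 'a mpoly = "(((nat + nat), nat) poly_mapping, 'a) poly_mapping"

definition YZ_vars :: "nat \<Rightarrow> (nat + nat) set" where
  "YZ_vars m = Inl ` {..<m} \<union> Inr ` {..<m}"

definition in_FYZ :: "nat \<Rightarrow> ('a::zero) mpoly \<Rightarrow> bool" where
  "in_FYZ m f \<longleftrightarrow> (\<forall>e\<in>Poly_Mapping.keys f. Poly_Mapping.keys e \<subseteq> YZ_vars m)"

definition pvars :: "('a::zero) mpoly \<Rightarrow> (nat + nat) set" where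
  "pvars G = (\<Union>e\<in>Poly_Mapping.keys G. Poly_Mapping.keys e)"

definition ml_exp :: "(nat + nat) set \<Rightarrow> ((nat + nat), nat) poly_mapping" where
  "ml_exp V = Abs_poly_mapping (\<lambda>v. if v \<in> V then 1 else 0)"

definition ml_mono :: "(nat + nat) set \<Rightarrow> ('a::{zero,one}) mpoly" where
  "ml_mono V = Poly_Mapping.single (ml_exp V) 1"

text \<open>Entry M_f(p,q) for p = prod of y_i (i in P), q = prod of z_j (j in Q):
  the unique G with f = p q G + Q', G using only variables of p,q, and Q'
  having no monomial divisible by pq that uses only variables of p,q.\<close>
definition pcm_entry :: "('a::comm_ring_1) mpoly \<Rightarrow> nat set \<Rightarrow> nat set \<Rightarrow> 'a mpoly" where
  "pcm_entry f P Q =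
     (let V = Inl ` P \<union> Inr ` Q in
      THE G. pvars G \<subseteq> V \<and>
        (\<exists>R. f = ml_mono (Inl ` P) * ml_mono (Inr ` Q) * G + R \<and>
             (\<forall>e\<in>Poly_Mapping.keys R. \<not> ((\<forall>v\<in>V. 1 \<le> Poly_Mapping.lookup e v) \<and> Poly_Mapping.keys e \<subseteq> V))))"

definition peval :: "((nat + nat) \<Rightarrow> 'a::comm_semiring_1) \<Rightarrow> 'a mpoly \<Rightarrow> 'a" where
  "peval S G = (\<Sum>e\<in>Poly_Mapping.keys G. Poly_Mapping.lookup G e * (\<Prod>v\<in>Poly_Mapping.keys e. S v ^ Poly_Mapping.lookup e v))"

text \<open>Index i < 2^m encodes the subset {k < m. bit i k} of {0..m-1}, i.e. a monic
  multilinear monomial; this is a bijection, so rows/columns of the 2^m x 2^m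
  matrix are indexed by all monic multilinear monomials in Y resp. Z.\<close>
definition idx_set :: "nat \<Rightarrow> nat \<Rightarrow> nat set" where
  "idx_set m i = {k. k < m \<and> bit i k}"

definition pcm_eval :: "nat \<Rightarrow> ('a::comm_ring_1) mpoly \<Rightarrow> ((nat + nat) \<Rightarrow> 'a) \<Rightarrow> 'a mat" where
  "pcm_eval m f S = mat (2^m) (2^m)
     (\<lambda>(i, j). peval S (pcm_entry f (idx_set m i) (idx_set m j)))"

definition maxrank :: "nat \<Rightarrow> ('a::field) mpoly \<Rightarrow> nat" where
  "maxrank m f = Max {vec_space.rank (2^m) (pcm_eval m f S) | S. True}"

end

theory Submission
  imports Defs
begin

text \<open>Because \<open>M_h|_S\<close> is additive in \<open>h\<close> and rank is subadditive, it suffices to show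
  \<open>rank (M_fg|_S) \<le> rank (M_f|_S)\<close> for a single term \<open>g = c x^b\<close>. The evaluated entry
  \<open>(P, Q)\<close> of \<open>M_h\<close> is \<open>\<Sum>\<^sub>e h_e w_PQ(e)\<close>, where \<open>w_PQ(e)\<close> is the value at \<open>S\<close> of
  \<open>x^e\<close> divided by the multilinear monomial on \<open>P \<union> Q\<close> if the support of \<open>e\<close> is exactly
  \<open>P \<union> Q\<close>, and \<open>0\<close> otherwise. For a shifted exponent, \<open>w_PQ(d + b)\<close> is a kernel in \<open>P\<close>
  and the \<open>Y\<close>-support of \<open>d\<close>, times a kernel in \<open>Q\<close> and the \<open>Z\<close>-support of \<open>d\<close>, times
  \<open>w(d)\<close> at the support of \<open>d\<close>. Hence \<open>M_fg|_S = A \<cdot> M_f|_S \<cdot> C\<close> for two matrices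
  \<open>A\<close>, \<open>C\<close>, and \<open>rank (A M C) \<le> rank M\<close>.\<close>

section \<open>Rank of a triple product\<close>

context vec_space
begin

lemma rank_le_card_spanning_set:
  assumes A: "A \<in> carrier_mat n nc" and T: "T \<subseteq> carrier_vec n" "finite T"
    and cols: "set (cols A) \<subseteq> span T"
  shows "rank A \<le> card T"
proof -
  obtain S where S: "maximal S (\<lambda>T. T \<subseteq> set (cols A) \<and> lin_indpt T)"
    using maximal_exists[of "\<lambda>T. T \<subseteq> set (cols A) \<and> lin_indpt T" "card (set (cols A))" "{}"]
    by (meson List.finite_set card_mono empty_iff empty_subsetI finite_lin_indpt2 rev_finite_subset)
  have S_sub: "S \<subseteq> set (cols A)" and S_indpt: "lin_indpt S"
    using S unfolding maximal_def by auto
  have "finite S" using S_sub rev_finite_subset by blast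
  moreover have "S \<subseteq> span T" using S_sub cols by auto
  ultimately obtain C :: "'a vec set" where "int (card C) \<le> int (card T) - int (card S)"
    using replacement[OF _ T(2) T(1) S_indpt] by blast
  with rank_card_indpt[OF A S] show ?thesis by linarith
qed

lemma set_cols_mult_subset_span:
  assumes A: "A \<in> carrier_mat n k" and B: "B \<in> carrier_mat k nc"
  shows "set (cols (A * B)) \<subseteq> span (set (cols A))"
proof
  fix x assume "x \<in> set (cols (A * B))"
  then obtain j where j: "j < nc" "x = col (A * B) j" using A B
    by (metis cols_length cols_nth in_set_conv_nth index_mult_mat(3) carrier_matD(2))
  have "x = A *\<^sub>v col B j" using j A B by (auto simp: mult_mat_vec_def intro!: eq_vecI)
  also have "A = mat_of_cols n (cols A)" using A mat_of_cols_cols[of A] by simp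
  also have "col B j = vec (length (cols A)) (\<lambda>i. col B j $ i)"
    using A B by (intro eq_vecI) auto
  also have "mat_of_cols n (cols A) *\<^sub>v vec (length (cols A)) (\<lambda>i. col B j $ i)
      = lincomb_list (\<lambda>i. col B j $ i) (cols A)"
    using A cols_dim[of A] by (subst lincomb_list_as_mat_mult) auto
  also have "\<dots> \<in> span_list (cols A)" unfolding span_list_def by auto
  also have "span_list (cols A) = span (set (cols A))"
    using A cols_dim[of A] by (intro span_list_as_span) auto
  finally show "x \<in> span (set (cols A))" .
qed

lemma set_cols_subset_span_maximal_indpt:
  assumes A: "A \<in> carrier_mat n nc" and S: "maximal S (\<lambda>T. T \<subseteq> set (cols A) \<and> lin_indpt T)"
  shows "set (cols A) \<subseteq> span S"
proof
  fix v assume v: "v \<in> set (cols A)"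
  have S_sub: "S \<subseteq> set (cols A)" and S_indpt: "lin_indpt S"
    using S unfolding maximal_def by auto
  have S_carrier: "S \<subseteq> carrier_vec n" and v_carrier: "v \<in> carrier_vec n"
    using S_sub v cols_dim[of A] A by auto
  show "v \<in> span S"
  proof (rule ccontr)
    assume v_notin: "v \<notin> span S"
    then have "v \<notin> S" using in_own_span[OF S_carrier] by auto
    with v_notin have "lin_indpt (S \<union> {v})"
      using lin_dep_iff_in_span[OF S_carrier S_indpt v_carrier] by blast
    with S S_sub v have "S \<union> {v} = S" unfolding maximal_def by blast
    with \<open>v \<notin> S\<close> show False by auto
  qed
qed

lemma mat_of_cols_factor:
  assumes M: "M \<in> carrier_mat n nc" and ws: "set ws \<subseteq> carrier_vec n"
    and cols: "set (cols M) \<subseteq> span (set ws)"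
  obtains C where "C \<in> carrier_mat (length ws) nc" "M = mat_of_cols n ws * C"
proof -
  have "\<exists>c. col M j = mat_of_cols n ws *\<^sub>v vec (length ws) c" if j: "j < nc" for j
  proof -
    have "col M j \<in> set (cols M)" using j M by (metis carrier_matD(2) cols_length cols_nth nth_mem)
    then have "col M j \<in> span_list ws" using cols span_list_as_span[OF ws] by auto
    then obtain c where "col M j = lincomb_list c ws" unfolding span_list_def by auto
    moreover have "\<forall>w\<in>set ws. dim_vec w = n" using ws by auto
    ultimately show ?thesis using lincomb_list_as_mat_mult[of ws c] by auto
  qed
  then obtain cf where cf: "\<And>j. j < nc \<Longrightarrow> col M j = mat_of_cols n ws *\<^sub>v vec (length ws) (cf j)"
    by metis
  define C where "C = mat (length ws) nc (\<lambda>(i, j). cf j i)"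
  have C: "C \<in> carrier_mat (length ws) nc" unfolding C_def by auto
  have "M = mat_of_cols n ws * C"
  proof (rule eq_matI)
    fix i j assume "i < dim_row (mat_of_cols n ws * C)" "j < dim_col (mat_of_cols n ws * C)"
    then have i: "i < n" and j: "j < nc" using C by auto
    have col_C: "col C j = vec (length ws) (cf j)" using j unfolding C_def by (auto intro!: eq_vecI)
    have "M $$ (i, j) = col M j $ i" using i j M by auto
    also have "\<dots> = row (mat_of_cols n ws) i \<bullet> col C j" using cf[OF j] i col_C by simp
    also have "\<dots> = (mat_of_cols n ws * C) $$ (i, j)" using i j C by simp
    finally show "M $$ (i, j) = (mat_of_cols n ws * C) $$ (i, j)" .
  qed (use M C in auto)
  with C show ?thesis using that by blast
qed

lemma rank_factorization:
  assumes M: "M \<in> carrier_mat n nc"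
  obtains ws C where "set ws \<subseteq> carrier_vec n" "length ws = rank M"
    "C \<in> carrier_mat (rank M) nc" "M = mat_of_cols n ws * C"
proof -
  obtain S where S: "maximal S (\<lambda>T. T \<subseteq> set (cols M) \<and> lin_indpt T)"
    using maximal_exists[of "\<lambda>T. T \<subseteq> set (cols M) \<and> lin_indpt T" "card (set (cols M))" "{}"]
    by (meson List.finite_set card_mono empty_iff empty_subsetI finite_lin_indpt2 rev_finite_subset)
  have S_sub: "S \<subseteq> set (cols M)" using S unfolding maximal_def by auto
  then obtain ws where ws: "distinct ws" "set ws = S"
    using finite_distinct_list rev_finite_subset by blast
  have len: "length ws = rank M" using rank_card_indpt[OF M S] ws distinct_card by metis
  have carrier: "set ws \<subseteq> carrier_vec n" using ws S_sub cols_dim[of M] M by auto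
  obtain C where "C \<in> carrier_mat (length ws) nc" "M = mat_of_cols n ws * C"
    using mat_of_cols_factor[OF M carrier] set_cols_subset_span_maximal_indpt[OF M S] ws by auto
  with carrier len show ?thesis using that by auto
qed

end

lemma rank_mult_mult_le:
  fixes M :: "'a::field mat"
  assumes A: "A \<in> carrier_mat k n" and M: "M \<in> carrier_mat n n'" and B: "B \<in> carrier_mat n' l"
  shows "vec_space.rank k (A * M * B) \<le> vec_space.rank n M"
proof -
  define r where "r = vec_space.rank n M"
  obtain ws C where ws: "set ws \<subseteq> carrier_vec n" "length ws = r"
    and C: "C \<in> carrier_mat r n'" and M_eq: "M = mat_of_cols n ws * C"
    using vec_space.rank_factorization[OF M] unfolding r_def by metis
  have W: "mat_of_cols n ws \<in> carrier_mat n r" using ws by auto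
  have AW: "A * mat_of_cols n ws \<in> carrier_mat k r" using A W by auto
  have CB: "C * B \<in> carrier_mat r l" using C B by auto
  have "A * M * B = (A * mat_of_cols n ws) * (C * B)"
    unfolding M_eq using assoc_mult_mat[OF A W C] assoc_mult_mat[OF AW C B] by simp
  then have "vec_space.rank k (A * M * B) \<le> card (set (cols (A * mat_of_cols n ws)))"
    using vec_space.rank_le_card_spanning_set[OF mult_carrier_mat[OF AW CB] _ _
        vec_space.set_cols_mult_subset_span[OF AW CB]] cols_dim[of "A * mat_of_cols n ws"] AW
    by auto
  also have "\<dots> \<le> r" using AW by (metis card_length cols_length carrier_matD(2))
  finally show ?thesis unfolding r_def .
qed

lemma keys_add_nat:
  fixes a b :: "'k \<Rightarrow>\<^sub>0 nat"
  shows "Poly_Mapping.keys (a + b) = Poly_Mapping.keys a \<union> Poly_Mapping.keys b"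
  by (auto simp: in_keys_iff lookup_add)

lemma lookup_mult_single_shift:
  fixes p :: "'k::cancel_comm_monoid_add \<Rightarrow>\<^sub>0 'b::comm_semiring_1"
  shows "Poly_Mapping.lookup (p * Poly_Mapping.single b c) (k + b) = Poly_Mapping.lookup p k * c"
proof -
  have "((c when b = q) when k + b = l + q) = ((c when k = l) when b = q)" for l q
    by (auto simp: when_def)
  then show ?thesis
    by (simp add: lookup_mult lookup_single mult_when)
qed

lemma keys_mult_single:
  fixes p :: "'k::cancel_comm_monoid_add \<Rightarrow>\<^sub>0 'b::comm_semiring_1"
  shows "Poly_Mapping.keys (p * Poly_Mapping.single b c) \<subseteq> (\<lambda>k. k + b) ` Poly_Mapping.keys p"
  using keys_mult[of p "Poly_Mapping.single b c"] by (auto split: if_splits)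

lemma sum_single_lookup_keys:
  fixes p :: "'k \<Rightarrow>\<^sub>0 'b::comm_monoid_add"
  shows "(\<Sum>k\<in>Poly_Mapping.keys p. Poly_Mapping.single k (Poly_Mapping.lookup p k)) = p"
proof (rule poly_mapping_eqI)
  fix k'
  have "(\<Sum>k\<in>Poly_Mapping.keys p. Poly_Mapping.lookup (Poly_Mapping.single k (Poly_Mapping.lookup p k)) k')
      = (\<Sum>k\<in>Poly_Mapping.keys p. if k = k' then Poly_Mapping.lookup p k else 0)"
    by (rule sum.cong) (auto simp: lookup_single when_def)
  also have "\<dots> = Poly_Mapping.lookup p k'" by (auto simp: in_keys_iff)
  finally show "Poly_Mapping.lookup (\<Sum>k\<in>Poly_Mapping.keys p.
      Poly_Mapping.single k (Poly_Mapping.lookup p k)) k' = Poly_Mapping.lookup p k'"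
    by (simp add: lookup_sum)
qed

text \<open>Both \<open>peval\<close> and the evaluated entries of the coefficient matrix are
  linear functionals of this form.\<close>

definition coeff_pairing :: "('k \<Rightarrow>\<^sub>0 'b::semiring_0) \<Rightarrow> ('k \<Rightarrow> 'b) \<Rightarrow> 'b" where
  "coeff_pairing p \<phi> = (\<Sum>k\<in>Poly_Mapping.keys p. Poly_Mapping.lookup p k * \<phi> k)"

lemma coeff_pairing_superset:
  assumes "finite A" "Poly_Mapping.keys p \<subseteq> A"
  shows "coeff_pairing p \<phi> = (\<Sum>k\<in>A. Poly_Mapping.lookup p k * \<phi> k)"
  unfolding coeff_pairing_def
  by (rule sum.mono_neutral_left) (use assms in \<open>auto simp: in_keys_iff\<close>)

lemma coeff_pairing_cong:
  "(\<And>k. k \<in> Poly_Mapping.keys p \<Longrightarrow> \<phi> k = \<psi> k) \<Longrightarrow> coeff_pairing p \<phi> = coeff_pairing p \<psi>"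
  unfolding coeff_pairing_def by (rule sum.cong) auto

lemma coeff_pairing_zero [simp]: "coeff_pairing 0 \<phi> = 0"
  by (simp add: coeff_pairing_def)

lemma coeff_pairing_add: "coeff_pairing (p + q) \<phi> = coeff_pairing p \<phi> + coeff_pairing q \<phi>"
  unfolding coeff_pairing_def
  by (rule setsum_keys_plus_distrib[where f = "\<lambda>k x. x * \<phi> k"]) (simp_all add: distrib_right)

lemma coeff_pairing_cmult:
  fixes p :: "'k \<Rightarrow>\<^sub>0 'b::comm_semiring_0"
  shows "coeff_pairing p (\<lambda>k. a * \<phi> k) = a * coeff_pairing p \<phi>"
  unfolding coeff_pairing_def by (simp add: sum_distrib_left ac_simps)

lemma coeff_pairing_sum:
  "coeff_pairing p (\<lambda>k. \<Sum>i\<in>I. \<phi> i k) = (\<Sum>i\<in>I. coeff_pairing p (\<phi> i))"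
  unfolding coeff_pairing_def by (simp add: sum_distrib_left) (rule sum.swap)

lemma coeff_pairing_mult_single:
  fixes p :: "'k::cancel_comm_monoid_add \<Rightarrow>\<^sub>0 'b::comm_semiring_1"
  shows "coeff_pairing (p * Poly_Mapping.single b c) \<phi> = c * coeff_pairing p (\<lambda>k. \<phi> (k + b))"
proof -
  have "coeff_pairing (p * Poly_Mapping.single b c) \<phi>
      = (\<Sum>k\<in>(\<lambda>k. k + b) ` Poly_Mapping.keys p. Poly_Mapping.lookup (p * Poly_Mapping.single b c) k * \<phi> k)"
    by (rule coeff_pairing_superset) (simp_all add: keys_mult_single)
  also have "\<dots> = (\<Sum>k\<in>Poly_Mapping.keys p.
      Poly_Mapping.lookup (p * Poly_Mapping.single b c) (k + b) * \<phi> (k + b))"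
    by (subst sum.reindex) (auto simp: inj_on_def)
  also have "\<dots> = c * coeff_pairing p (\<lambda>k. \<phi> (k + b))"
    by (simp add: coeff_pairing_def lookup_mult_single_shift sum_distrib_left ac_simps)
  finally show ?thesis .
qed

section \<open>Entries of the polynomial coefficient matrix\<close>

lemma lookup_ml_exp: "finite V \<Longrightarrow> Poly_Mapping.lookup (ml_exp V) v = (if v \<in> V then 1 else 0)"
  unfolding ml_exp_def by (subst lookup_Abs_poly_mapping) auto

lemma keys_ml_exp: "finite V \<Longrightarrow> Poly_Mapping.keys (ml_exp V) = V"
  by (auto simp: in_keys_iff lookup_ml_exp split: if_splits)

lemma ml_exp_Plus: "finite P \<Longrightarrow> finite Q \<Longrightarrow> ml_exp (Inl ` P) + ml_exp (Inr ` Q) = ml_exp (P <+> Q)"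
  by (rule poly_mapping_eqI) (auto simp: lookup_add lookup_ml_exp)

lemma ml_exp_decomp:
  assumes "finite V" "Poly_Mapping.keys e = V"
  obtains d where "e = d + ml_exp V" "Poly_Mapping.keys d \<subseteq> V"
proof
  have "Poly_Mapping.lookup (ml_exp V) v \<le> Poly_Mapping.lookup e v" for v
    using assms by (auto simp: lookup_ml_exp in_keys_iff)
  then show "e = (e - ml_exp V) + ml_exp V"
    by (intro poly_mapping_eqI) (simp add: lookup_add lookup_minus)
  show "Poly_Mapping.keys (e - ml_exp V) \<subseteq> V"
    using assms(2) by (auto simp: in_keys_iff lookup_minus)
qed

lemma lookup_ml_mono_mult:
  fixes G :: "('a::comm_semiring_1) mpoly"
  shows "Poly_Mapping.lookup (ml_mono V * G) (d + ml_exp V) = Poly_Mapping.lookup G d"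
proof -
  have "ml_mono V * G = G * Poly_Mapping.single (ml_exp V) 1" by (simp add: ml_mono_def mult.commute)
  then show ?thesis by (simp add: lookup_mult_single_shift)
qed

definition ml_cofactor :: "('a::zero) mpoly \<Rightarrow> (nat + nat) set \<Rightarrow> 'a mpoly" where
  "ml_cofactor h V = Abs_poly_mapping (\<lambda>d.
     if Poly_Mapping.keys d \<subseteq> V then Poly_Mapping.lookup h (d + ml_exp V) else 0)"

lemma lookup_ml_cofactor:
  "Poly_Mapping.lookup (ml_cofactor h V) d =
     (if Poly_Mapping.keys d \<subseteq> V then Poly_Mapping.lookup h (d + ml_exp V) else 0)"
proof -
  have "{d. (if Poly_Mapping.keys d \<subseteq> V then Poly_Mapping.lookup h (d + ml_exp V) else 0) \<noteq> 0}
     \<subseteq> (\<lambda>e. e - ml_exp V) ` Poly_Mapping.keys h"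
  proof
    fix d assume "d \<in> {d. (if Poly_Mapping.keys d \<subseteq> V then Poly_Mapping.lookup h (d + ml_exp V) else 0) \<noteq> 0}"
    then have "d + ml_exp V \<in> Poly_Mapping.keys h" by (auto simp: in_keys_iff split: if_splits)
    then show "d \<in> (\<lambda>e. e - ml_exp V) ` Poly_Mapping.keys h" by (rule rev_image_eqI) simp
  qed
  then have "finite {d. (if Poly_Mapping.keys d \<subseteq> V then Poly_Mapping.lookup h (d + ml_exp V) else 0) \<noteq> 0}"
    by (rule finite_subset) auto
  then show ?thesis unfolding ml_cofactor_def by simp
qed

lemma pvars_ml_cofactor: "pvars (ml_cofactor h V) \<subseteq> V"
  unfolding pvars_def by (auto simp: in_keys_iff[of _ "ml_cofactor h V"] lookup_ml_cofactor split: if_splits)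

lemma lookup_ml_mono_mult_ml_cofactor:
  fixes h :: "('a::comm_semiring_1) mpoly"
  assumes "finite V" "Poly_Mapping.keys e = V"
  shows "Poly_Mapping.lookup (ml_mono V * ml_cofactor h V) e = Poly_Mapping.lookup h e"
proof -
  obtain d where e: "e = d + ml_exp V" and d: "Poly_Mapping.keys d \<subseteq> V"
    using ml_exp_decomp[OF assms] .
  show ?thesis unfolding e lookup_ml_mono_mult lookup_ml_cofactor using d by simp
qed

lemma ml_cofactor_unique:
  fixes G :: "('a::comm_semiring_1) mpoly"
  assumes V: "finite V" and G: "pvars G \<subseteq> V" and h: "h = ml_mono V * G + R"
    and R: "\<And>e. e \<in> Poly_Mapping.keys R \<Longrightarrow> Poly_Mapping.keys e \<noteq> V"
  shows "G = ml_cofactor h V"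
proof (rule poly_mapping_eqI)
  fix d
  show "Poly_Mapping.lookup G d = Poly_Mapping.lookup (ml_cofactor h V) d"
  proof (cases "Poly_Mapping.keys d \<subseteq> V")
    case True
    then have "Poly_Mapping.keys (d + ml_exp V) = V" by (simp add: keys_add_nat keys_ml_exp[OF V] Un_absorb1)
    then have "Poly_Mapping.lookup R (d + ml_exp V) = 0" using R by (auto simp: in_keys_iff)
    with True show ?thesis by (simp add: h lookup_add lookup_ml_mono_mult lookup_ml_cofactor)
  next
    case False
    then have "d \<notin> Poly_Mapping.keys G" using G unfolding pvars_def by auto
    with False show ?thesis by (simp add: lookup_ml_cofactor in_keys_iff)
  qed
qed

lemma pcm_entry_eq_ml_cofactor:
  fixes h :: "('a::comm_ring_1) mpoly"
  assumes "finite P" "finite Q"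
  shows "pcm_entry h P Q = ml_cofactor h (P <+> Q)"
proof -
  define V where "V = P <+> Q"
  have V: "finite V" using assms by (simp add: V_def)
  have mono: "ml_mono (Inl ` P) * ml_mono (Inr ` Q) = (ml_mono V :: 'a mpoly)"
    unfolding ml_mono_def V_def using ml_exp_Plus[OF assms] by (simp add: mult_single)
  have full: "((\<forall>v\<in>V. 1 \<le> Poly_Mapping.lookup e v) \<and> Poly_Mapping.keys e \<subseteq> V) \<longleftrightarrow> Poly_Mapping.keys e = V"
    for e :: "(nat + nat) \<Rightarrow>\<^sub>0 nat"
    by (auto simp: in_keys_iff)
  have union: "Inl ` P \<union> Inr ` Q = V" by (auto simp: V_def)
  have "pcm_entry h P Q = (THE G. pvars G \<subseteq> V \<and>
      (\<exists>R. h = ml_mono V * G + R \<and> (\<forall>e\<in>Poly_Mapping.keys R. Poly_Mapping.keys e \<noteq> V)))"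
    unfolding pcm_entry_def Let_def union mono full ..
  also have "\<dots> = ml_cofactor h V"
  proof (rule the_equality)
    let ?R = "h - ml_mono V * ml_cofactor h V"
    have "Poly_Mapping.keys e \<noteq> V" if "e \<in> Poly_Mapping.keys ?R" for e
      using that lookup_ml_mono_mult_ml_cofactor[OF V, of e h] by (auto simp: in_keys_iff lookup_minus)
    moreover have "h = ml_mono V * ml_cofactor h V + ?R" by simp
    ultimately show "pvars (ml_cofactor h V) \<subseteq> V \<and> (\<exists>R. h = ml_mono V * ml_cofactor h V + R \<and>
        (\<forall>e\<in>Poly_Mapping.keys R. Poly_Mapping.keys e \<noteq> V))"
      using pvars_ml_cofactor by blast
  qed (use ml_cofactor_unique[OF V] in blast)
  finally show ?thesis unfolding V_def .
qed

definition entry_weight :: "('v \<Rightarrow> 'a::comm_semiring_1) \<Rightarrow> 'v set \<Rightarrow> ('v \<Rightarrow>\<^sub>0 nat) \<Rightarrow> 'a" where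
  "entry_weight S V e =
     (if Poly_Mapping.keys e = V then \<Prod>v\<in>V. S v ^ (Poly_Mapping.lookup e v - 1) else 0)"

lemma peval_ml_cofactor:
  fixes h :: "('a::comm_ring_1) mpoly"
  assumes V: "finite V"
  shows "peval S (ml_cofactor h V) = coeff_pairing h (entry_weight S V)"
proof -
  let ?G = "ml_cofactor h V" and ?t = "ml_exp V"
  let ?E = "{e \<in> Poly_Mapping.keys h. Poly_Mapping.keys e = V}"
  have keys_G: "Poly_Mapping.keys d \<subseteq> V" if "d \<in> Poly_Mapping.keys ?G" for d
    using that by (auto simp: in_keys_iff lookup_ml_cofactor split: if_splits)
  have keys_shift: "Poly_Mapping.keys (d + ?t) = V" if "d \<in> Poly_Mapping.keys ?G" for d
    using keys_G[OF that] by (simp add: keys_add_nat keys_ml_exp[OF V] Un_absorb1)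
  have image: "(\<lambda>d. d + ?t) ` Poly_Mapping.keys ?G = ?E"
  proof
    show "(\<lambda>d. d + ?t) ` Poly_Mapping.keys ?G \<subseteq> ?E"
      using keys_shift by (auto simp: in_keys_iff lookup_ml_cofactor split: if_splits)
    show "?E \<subseteq> (\<lambda>d. d + ?t) ` Poly_Mapping.keys ?G"
    proof
      fix e assume e: "e \<in> ?E"
      then obtain d where d: "e = d + ?t" "Poly_Mapping.keys d \<subseteq> V"
        using ml_exp_decomp[OF V] by blast
      with e have "d \<in> Poly_Mapping.keys ?G" by (simp add: in_keys_iff lookup_ml_cofactor)
      with d(1) show "e \<in> (\<lambda>d. d + ?t) ` Poly_Mapping.keys ?G" by blast
    qed
  qed
  have weight: "entry_weight S V (d + ?t) = (\<Prod>v\<in>Poly_Mapping.keys d. S v ^ Poly_Mapping.lookup d v)"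
    if d: "d \<in> Poly_Mapping.keys ?G" for d
  proof -
    have "(\<Prod>v\<in>V. S v ^ Poly_Mapping.lookup d v) = (\<Prod>v\<in>Poly_Mapping.keys d. S v ^ Poly_Mapping.lookup d v)"
      by (intro prod.mono_neutral_right[OF V keys_G[OF d]]) (auto simp: in_keys_iff)
    then show ?thesis
      using keys_shift[OF d] by (simp add: entry_weight_def lookup_add lookup_ml_exp[OF V] cong: prod.cong)
  qed
  have "coeff_pairing h (entry_weight S V) = (\<Sum>e\<in>?E. Poly_Mapping.lookup h e * entry_weight S V e)"
    unfolding coeff_pairing_def by (rule sum.mono_neutral_right) (auto simp: entry_weight_def)
  also have "\<dots> = (\<Sum>d\<in>Poly_Mapping.keys ?G. Poly_Mapping.lookup h (d + ?t) * entry_weight S V (d + ?t))"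
    unfolding image[symmetric] by (subst sum.reindex) (auto simp: inj_on_def)
  also have "\<dots> = peval S ?G"
    unfolding peval_def
    by (intro sum.cong refl) (simp add: weight keys_G lookup_ml_cofactor)
  finally show ?thesis ..
qed

lemma peval_pcm_entry:
  fixes h :: "('a::comm_ring_1) mpoly"
  assumes "finite P" "finite Q"
  shows "peval S (pcm_entry h P Q) = coeff_pairing h (entry_weight S (P <+> Q))"
  using assms by (simp add: pcm_entry_eq_ml_cofactor peval_ml_cofactor)

section \<open>Shifting an exponent by a monomial\<close>

lemma Inl_mem_Plus [simp]: "Inl a \<in> A <+> B \<longleftrightarrow> a \<in> A"
  by auto

lemma Inr_mem_Plus [simp]: "Inr b \<in> A <+> B \<longleftrightarrow> b \<in> B"
  by auto

lemma Plus_eq_iff_vimage: "P <+> Q = X \<longleftrightarrow> P = Inl -` X \<and> Q = Inr -` X"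
proof
  assume "P = Inl -` X \<and> Q = Inr -` X"
  moreover have "x \<in> Inl -` X <+> Inr -` X" if "x \<in> X" for x
    using that by (cases x) auto
  ultimately show "P <+> Q = X" by auto
qed auto

lemma sum_Pow_Plus_delta:
  assumes "finite A" "finite B" "Inl -` X \<subseteq> A" "Inr -` X \<subseteq> B"
  shows "(\<Sum>P\<in>Pow A. \<Sum>Q\<in>Pow B. if P <+> Q = X then g P Q else 0) = g (Inl -` X) (Inr -` X)"
proof -
  have "(\<Sum>P\<in>Pow A. \<Sum>Q\<in>Pow B. if P <+> Q = X then g P Q else 0)
      = (\<Sum>P\<in>Pow A. if P = Inl -` X then \<Sum>Q\<in>Pow B. if Q = Inr -` X then g P Q else 0 else 0)"
    unfolding Plus_eq_iff_vimage by (intro sum.cong refl) auto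
  also have "\<dots> = g (Inl -` X) (Inr -` X)" using assms by (simp add: sum.delta)
  finally show ?thesis .
qed

definition shift_kernel :: "('v \<Rightarrow> 'a::comm_semiring_1) \<Rightarrow> ('v \<Rightarrow> nat) \<Rightarrow> 'v set \<Rightarrow> 'v set \<Rightarrow> 'a" where
  "shift_kernel S \<beta> V W =
     (if W \<union> {v. \<beta> v \<noteq> 0} = V then \<Prod>v\<in>V. S v ^ (if v \<in> W then \<beta> v else \<beta> v - 1) else 0)"

lemma entry_weight_add:
  fixes S :: "'v \<Rightarrow> 'a::comm_semiring_1"
  assumes V: "finite V"
  shows "entry_weight S V (d + b) =
    shift_kernel S (Poly_Mapping.lookup b) V (Poly_Mapping.keys d) * entry_weight S (Poly_Mapping.keys d) d"
proof -
  let ?K = "Poly_Mapping.keys d"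
  have keys_b: "{v. Poly_Mapping.lookup b v \<noteq> 0} = Poly_Mapping.keys b" by (auto simp: in_keys_iff)
  show ?thesis
  proof (cases "?K \<union> Poly_Mapping.keys b = V")
    case True
    have split_power: "S v ^ (Poly_Mapping.lookup (d + b) v - 1)
        = S v ^ (if v \<in> ?K then Poly_Mapping.lookup b v else Poly_Mapping.lookup b v - 1)
          * (if v \<in> ?K then S v ^ (Poly_Mapping.lookup d v - 1) else 1)" for v
    proof (cases "v \<in> ?K")
      case True
      then have "Poly_Mapping.lookup d v + Poly_Mapping.lookup b v - 1
          = Poly_Mapping.lookup b v + (Poly_Mapping.lookup d v - 1)"
        by (simp add: in_keys_iff)
      with True show ?thesis by (simp add: lookup_add power_add)
    qed (simp add: lookup_add in_keys_iff)
    have "V \<inter> ?K = ?K" using True by blast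
    then have weight_d: "(\<Prod>v\<in>V. if v \<in> ?K then S v ^ (Poly_Mapping.lookup d v - 1) else 1)
        = entry_weight S ?K d"
      using V by (simp add: entry_weight_def prod.If_cases)
    have "entry_weight S V (d + b) = (\<Prod>v\<in>V. S v ^ (Poly_Mapping.lookup (d + b) v - 1))"
      using True by (simp add: entry_weight_def keys_add_nat)
    also have "\<dots> = (\<Prod>v\<in>V. S v ^ (if v \<in> ?K then Poly_Mapping.lookup b v else Poly_Mapping.lookup b v - 1))
        * (\<Prod>v\<in>V. if v \<in> ?K then S v ^ (Poly_Mapping.lookup d v - 1) else 1)"
      unfolding split_power by (rule prod.distrib)
    also have "\<dots> = shift_kernel S (Poly_Mapping.lookup b) V ?K * entry_weight S ?K d"
      unfolding shift_kernel_def keys_b weight_d using True by simp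
    finally show ?thesis .
  next
    case False
    then show ?thesis
      unfolding entry_weight_def shift_kernel_def keys_b keys_add_nat by simp
  qed
qed

lemma shift_kernel_Plus:
  fixes S :: "'u + 'w \<Rightarrow> 'a::comm_semiring_1"
  assumes "finite P" "finite Q"
  shows "shift_kernel S \<beta> (P <+> Q) (P' <+> Q') =
    shift_kernel (\<lambda>k. S (Inl k)) (\<lambda>k. \<beta> (Inl k)) P P' * shift_kernel (\<lambda>k. S (Inr k)) (\<lambda>k. \<beta> (Inr k)) Q Q'"
proof -
  have "(P' <+> Q') \<union> {v. \<beta> v \<noteq> 0} = P <+> Q \<longleftrightarrow>
      P' \<union> {k. \<beta> (Inl k) \<noteq> 0} = P \<and> Q' \<union> {k. \<beta> (Inr k) \<noteq> 0} = Q"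
    unfolding eq_commute[of _ "P <+> Q"] Plus_eq_iff_vimage by auto
  then show ?thesis
    unfolding shift_kernel_def using assms by (simp add: prod.Plus)
qed

section \<open>Matrices indexed by subsets\<close>

lemma idx_set_subset: "idx_set m i \<subseteq> {..<m}"
  by (auto simp: idx_set_def)

lemma idx_set_inj: "inj_on (idx_set m) {..<2^m}"
proof (rule inj_onI)
  fix i j :: nat assume i: "i \<in> {..<2^m}" and j: "j \<in> {..<2^m}" and eq: "idx_set m i = idx_set m j"
  from eq have "take_bit m i = take_bit m j"
    by (auto simp: bit_eq_iff bit_take_bit_iff idx_set_def set_eq_iff)
  with i j show "i = j" by (simp add: take_bit_nat_eq_self)
qed

lemma idx_set_bij: "bij_betw (idx_set m) {..<2^m} (Pow {..<m})"
proof -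
  have sub: "idx_set m ` {..<2^m} \<subseteq> Pow {..<m}" using idx_set_subset by blast
  have "card (idx_set m ` {..<2^m}) = card (Pow {..<m})"
    using card_image[OF idx_set_inj] by (simp add: card_Pow)
  then have "idx_set m ` {..<2^m} = Pow {..<m}" by (intro card_subset_eq[OF _ sub]) auto
  with idx_set_inj show ?thesis unfolding bij_betw_def by simp
qed

lemma sum_idx_set: "(\<Sum>i<2^m. g (idx_set m i)) = (\<Sum>P\<in>Pow {..<m}. g P)"
  using sum.reindex_bij_betw[OF idx_set_bij, of g] by simp

definition subset_mat :: "nat \<Rightarrow> (nat set \<Rightarrow> nat set \<Rightarrow> 'a) \<Rightarrow> 'a mat" where
  "subset_mat m F = mat (2^m) (2^m) (\<lambda>(i, j). F (idx_set m i) (idx_set m j))"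

lemma subset_mat_carrier [simp]: "subset_mat m F \<in> carrier_mat (2^m) (2^m)"
  by (simp add: subset_mat_def)

lemma subset_mat_cong:
  assumes "\<And>P Q. P \<subseteq> {..<m} \<Longrightarrow> Q \<subseteq> {..<m} \<Longrightarrow> F P Q = G P Q"
  shows "subset_mat m F = subset_mat m G"
  unfolding subset_mat_def by (rule cong_mat) (simp_all add: assms idx_set_subset)

lemma subset_mat_add: "subset_mat m F + subset_mat m G = subset_mat m (\<lambda>P Q. F P Q + G P Q)"
  by (intro eq_matI) (auto simp: subset_mat_def)

lemma subset_mat_zero: "subset_mat m (\<lambda>P Q. 0) = 0\<^sub>m (2^m) (2^m)"
  by (intro eq_matI) (auto simp: subset_mat_def)

lemma subset_mat_mult:
  fixes F G :: "nat set \<Rightarrow> nat set \<Rightarrow> 'a::comm_semiring_0"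
  shows "subset_mat m F * subset_mat m G = subset_mat m (\<lambda>P R. \<Sum>Q\<in>Pow {..<m}. F P Q * G Q R)"
proof (rule eq_matI)
  fix i j assume "i < dim_row (subset_mat m (\<lambda>P R. \<Sum>Q\<in>Pow {..<m}. F P Q * G Q R))"
    and "j < dim_col (subset_mat m (\<lambda>P R. \<Sum>Q\<in>Pow {..<m}. F P Q * G Q R))"
  then have "i < 2^m" "j < 2^m" by (simp_all add: subset_mat_def)
  then show "(subset_mat m F * subset_mat m G) $$ (i, j)
      = subset_mat m (\<lambda>P R. \<Sum>Q\<in>Pow {..<m}. F P Q * G Q R) $$ (i, j)"
    using sum_idx_set[where g = "\<lambda>Q. F (idx_set m i) Q * G Q (idx_set m j)"]
    by (simp add: subset_mat_def scalar_prod_def atLeast0LessThan)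
qed (simp_all add: subset_mat_def)

lemma pcm_eval_eq_subset_mat:
  fixes h :: "('a::comm_ring_1) mpoly"
  shows "pcm_eval m h S = subset_mat m (\<lambda>P Q. coeff_pairing h (entry_weight S (P <+> Q)))"
proof -
  have "pcm_eval m h S = subset_mat m (\<lambda>P Q. peval S (pcm_entry h P Q))"
    by (simp add: pcm_eval_def subset_mat_def)
  also have "\<dots> = subset_mat m (\<lambda>P Q. coeff_pairing h (entry_weight S (P <+> Q)))"
    by (rule subset_mat_cong) (meson finite_lessThan finite_subset peval_pcm_entry)
  finally show ?thesis .
qed

lemma pcm_eval_carrier [simp]: "pcm_eval m h S \<in> carrier_mat (2^m) (2^m)"
  by (simp add: pcm_eval_def)

lemma pcm_eval_add:
  fixes h1 h2 :: "('a::comm_ring_1) mpoly"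
  shows "pcm_eval m (h1 + h2) S = pcm_eval m h1 S + pcm_eval m h2 S"
  by (simp add: pcm_eval_eq_subset_mat subset_mat_add coeff_pairing_add)

lemma pcm_eval_zero: "pcm_eval m (0 :: ('a::comm_ring_1) mpoly) S = 0\<^sub>m (2^m) (2^m)"
  by (simp add: pcm_eval_eq_subset_mat subset_mat_zero)

lemma sum_shift_kernel_entry_weight:
  fixes S :: "nat + nat \<Rightarrow> 'a::comm_semiring_1"
  assumes d: "Poly_Mapping.keys d \<subseteq> YZ_vars m" and PQ: "finite P" "finite Q"
  shows "(\<Sum>P'\<in>Pow {..<m}. \<Sum>Q'\<in>Pow {..<m}.
      shift_kernel (\<lambda>k. S (Inl k)) (\<lambda>k. Poly_Mapping.lookup b (Inl k)) P P' *
      shift_kernel (\<lambda>k. S (Inr k)) (\<lambda>k. Poly_Mapping.lookup b (Inr k)) Q Q' *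
      entry_weight S (P' <+> Q') d) = entry_weight S (P <+> Q) (d + b)"
    (is "(\<Sum>P'\<in>_. \<Sum>Q'\<in>_. ?kY P' * ?kZ Q' * _) = _")
proof -
  let ?K = "Poly_Mapping.keys d"
  have "(\<Sum>P'\<in>Pow {..<m}. \<Sum>Q'\<in>Pow {..<m}. ?kY P' * ?kZ Q' * entry_weight S (P' <+> Q') d)
      = (\<Sum>P'\<in>Pow {..<m}. \<Sum>Q'\<in>Pow {..<m}.
          if P' <+> Q' = ?K then ?kY P' * ?kZ Q' * entry_weight S ?K d else 0)"
    by (intro sum.cong refl) (simp add: entry_weight_def)
  also have "\<dots> = ?kY (Inl -` ?K) * ?kZ (Inr -` ?K) * entry_weight S ?K d"
    by (rule sum_Pow_Plus_delta) (use d in \<open>auto simp: YZ_vars_def\<close>)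
  also have "\<dots> = shift_kernel S (Poly_Mapping.lookup b) (P <+> Q) ?K * entry_weight S ?K d"
    using shift_kernel_Plus[OF PQ, of S "Poly_Mapping.lookup b" "Inl -` ?K" "Inr -` ?K"]
      Plus_eq_iff_vimage[of "Inl -` ?K" "Inr -` ?K" ?K] by simp
  also have "\<dots> = entry_weight S (P <+> Q) (d + b)"
    using PQ by (simp add: entry_weight_add)
  finally show ?thesis .
qed

lemma pcm_eval_mult_single:
  fixes f :: "('a::comm_ring_1) mpoly"
  assumes f: "in_FYZ m f"
  shows "pcm_eval m (f * Poly_Mapping.single b c) S =
    subset_mat m (\<lambda>P P'. c * shift_kernel (\<lambda>k. S (Inl k)) (\<lambda>k. Poly_Mapping.lookup b (Inl k)) P P')
    * pcm_eval m f S
    * subset_mat m (\<lambda>Q' Q. shift_kernel (\<lambda>k. S (Inr k)) (\<lambda>k. Poly_Mapping.lookup b (Inr k)) Q Q')"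
    (is "_ = subset_mat m (\<lambda>P P'. c * ?kY P P') * _ * subset_mat m (\<lambda>Q' Q. ?kZ Q Q')")
proof -
  let ?E = "\<lambda>P' Q'. coeff_pairing f (entry_weight S (P' <+> Q'))"
  let ?\<Sigma> = "\<lambda>g. \<Sum>P'\<in>Pow {..<m}. \<Sum>Q'\<in>Pow {..<m}. g P' Q'"
  have "(\<Sum>Q'\<in>Pow {..<m}. (\<Sum>P'\<in>Pow {..<m}. c * ?kY P P' * ?E P' Q') * ?kZ Q Q')
      = c * coeff_pairing f (\<lambda>d. ?\<Sigma> (\<lambda>P' Q'. ?kY P P' * ?kZ Q Q' * entry_weight S (P' <+> Q') d))"
    for P Q
  proof -
    have "(\<Sum>Q'\<in>Pow {..<m}. (\<Sum>P'\<in>Pow {..<m}. c * ?kY P P' * ?E P' Q') * ?kZ Q Q')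
        = c * ?\<Sigma> (\<lambda>P' Q'. ?kY P P' * ?kZ Q Q' * ?E P' Q')"
      unfolding sum_distrib_left sum_distrib_right by (subst sum.swap) (simp add: ac_simps)
    then show ?thesis by (simp add: coeff_pairing_sum coeff_pairing_cmult)
  qed
  then have "subset_mat m (\<lambda>P P'. c * ?kY P P') * pcm_eval m f S * subset_mat m (\<lambda>Q' Q. ?kZ Q Q')
      = subset_mat m (\<lambda>P Q. c * coeff_pairing f (\<lambda>d.
          ?\<Sigma> (\<lambda>P' Q'. ?kY P P' * ?kZ Q Q' * entry_weight S (P' <+> Q') d)))"
    by (simp add: pcm_eval_eq_subset_mat subset_mat_mult)
  also have "\<dots> = subset_mat m (\<lambda>P Q. c * coeff_pairing f (\<lambda>d. entry_weight S (P <+> Q) (d + b)))"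
  proof (rule subset_mat_cong)
    fix P Q :: "nat set" assume "P \<subseteq> {..<m}" "Q \<subseteq> {..<m}"
    then have "finite P" "finite Q" by (auto intro: finite_subset)
    with f show "c * coeff_pairing f (\<lambda>d. ?\<Sigma> (\<lambda>P' Q'. ?kY P P' * ?kZ Q Q' * entry_weight S (P' <+> Q') d))
        = c * coeff_pairing f (\<lambda>d. entry_weight S (P <+> Q) (d + b))"
      unfolding in_FYZ_def by (simp cong: coeff_pairing_cong add: sum_shift_kernel_entry_weight)
  qed
  also have "\<dots> = pcm_eval m (f * Poly_Mapping.single b c) S"
    by (simp add: pcm_eval_eq_subset_mat coeff_pairing_mult_single)
  finally show ?thesis ..
qed

lemma rank_le_maxrank: "vec_space.rank (2^m) (pcm_eval m h S) \<le> maxrank m h"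
proof -
  have "{vec_space.rank (2^m) (pcm_eval m h S) | S. True} \<subseteq> {..2^m}"
    using vec_space.rank_le_nc[OF pcm_eval_carrier] by auto
  then show ?thesis unfolding maxrank_def by (intro Max_ge) (auto intro: finite_subset)
qed

lemma maxrank_leI:
  assumes "\<And>S. vec_space.rank (2^m) (pcm_eval m h S) \<le> k"
  shows "maxrank m h \<le> k"
proof -
  have "{vec_space.rank (2^m) (pcm_eval m h S) | S. True} \<subseteq> {..2^m}"
    using vec_space.rank_le_nc[OF pcm_eval_carrier] by auto
  then show ?thesis unfolding maxrank_def using assms by (subst Max_le_iff) (auto intro: finite_subset)
qed

lemma rank_pcm_eval_mult_single_le:
  fixes f :: "('a::field) mpoly"
  assumes "in_FYZ m f"
  shows "vec_space.rank (2^m) (pcm_eval m (f * Poly_Mapping.single b c) S) \<le> maxrank m f"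
  unfolding pcm_eval_mult_single[OF assms]
  by (rule order.trans[OF rank_mult_mult_le[OF subset_mat_carrier pcm_eval_carrier subset_mat_carrier]
        rank_le_maxrank])

lemma rank_pcm_eval_mult_sum_le:
  fixes f :: "('a::field) mpoly"
  assumes f: "in_FYZ m f" and B: "finite B"
  shows "vec_space.rank (2^m) (pcm_eval m (f * (\<Sum>b\<in>B. Poly_Mapping.single b (c b))) S)
    \<le> card B * maxrank m f"
  using B
proof (induction B rule: finite_induct)
  case empty
  then show ?case by (simp add: pcm_eval_zero vec_space.rank_0I)
next
  case (insert b B)
  let ?rank = "vec_space.rank (2^m)" and ?g = "\<Sum>b\<in>B. Poly_Mapping.single b (c b)"
  have "?rank (pcm_eval m (f * (\<Sum>b\<in>insert b B. Poly_Mapping.single b (c b))) S)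
      = ?rank (pcm_eval m (f * Poly_Mapping.single b (c b)) S + pcm_eval m (f * ?g) S)"
    using insert by (simp add: distrib_left pcm_eval_add)
  also have "\<dots> \<le> ?rank (pcm_eval m (f * Poly_Mapping.single b (c b)) S) + ?rank (pcm_eval m (f * ?g) S)"
    by (rule vec_space.rank_subadditive[OF pcm_eval_carrier pcm_eval_carrier])
  also have "\<dots> \<le> maxrank m f + card B * maxrank m f"
    using rank_pcm_eval_mult_single_le[OF f] insert.IH by (rule add_mono)
  finally show ?case using insert by simp
qed

theorem corollary3:
  fixes f g :: "('a::field) mpoly" and m r :: nat
  assumes "in_FYZ m f" and "in_FYZ m g"
    and "card (Poly_Mapping.keys g) = r"
  shows "maxrank m (f * g) \<le> r * maxrank m f"
proof (rule maxrank_leI)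
  fix S
  show "vec_space.rank (2^m) (pcm_eval m (f * g) S) \<le> r * maxrank m f"
    using rank_pcm_eval_mult_sum_le[OF assms(1) finite_keys[of g], where c = "Poly_Mapping.lookup g" and S = S] assms(3)
    by (simp add: sum_single_lookup_keys)
qed

end
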